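(* Let $W(x_1,\dots,x_n)$ be an invertible, non-degenerate, quasi-homogeneous polynomial with $2\sum_jw_j=d$, let $J_W^2\in G\subseteq\operatorname{SL}_W$, and let $V=x_0^2+W$, $V^\star=x_0^2+W^\star$. For subgroups $L\subseteq\operatorname{Aut}(V)$ write $L^\vee\subseteq\operatorname{Aut}(V^\star)$ for the Berglund--Hübsch dual. Then $G^\vee=G^\star[\sigma^\star,J_{W^\star}]$, $G[\sigma]^\vee=G^\star[J_{W^\star}]$, $G[\sigma J_W]^\vee=G^\star[\sigma^\star J_{W^\star}]$, $G[J_W]^\vee=G^\star[\sigma^\star]$, $G[\sigma,J_W]^\vee=G^\star$. In particular the inclusions $G\subseteq G[\sigma],G[\sigma J_W],G[J_W]\subseteq G[\sigma,J_W]$ (all injective) correspond to the reversed inclusions $G^\star\subseteq G^\star[J_{W^\star}],G^\star[\sigma^\star J_{W^\star}],G^\star[\sigma^\star]\subseteq G^\star[\sigma^\star,J_{W^\star}]$.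
   Context: Invertible: $W=\sum_i\prod_jx_j^{m_{i,j}}$ with invertible exponent matrix; quasi-homogeneous of weights $w_j$, degree $d$; non-degenerate. $W^\star=\sum_i\prod_jx_j^{m_{j,i}}$. $\operatorname{Aut}_W$: diagonal symmetries; $\operatorname{SL}_W=\operatorname{Aut}_W\cap\operatorname{SL}(n;\mathbb C)$; $J_W=(e^{2\pi iw_j/d})_j$. Subgroups of $\operatorname{Aut}_W$ (and $J_W$) are regarded as diagonal symmetries of $V$ fixing $x_0$; $\sigma=(-1,1,\dots,1)\in\operatorname{Aut}(V)$ and $\sigma^\star=(-1,1,\dots,1)\in\operatorname{Aut}(V^\star)$. $L[h_1,h_2]$ is the group generated by $L$ and $h_1,h_2$. Berglund--Hübsch duality for an invertible polynomial $P=\sum_i\prod_jx_j^{a_{i,j}}$ with inverse exponent matrix $(a^{i,j})$ and transpose $P^{\mathrm T}$: with $\bar\rho_k=(e^{2\pi ia^{k,j}})_j\in\operatorname{Aut}(P^{\mathrm T})$, the dual of $L\subseteq\operatorname{Aut}(P)$ is $\{\prod_k\bar\rho_k^{r_k}:\prod_kx_k^{r_k}\text{ is }L\text{-invariant}\}$, equal to the kernel of the Cartier dual $\operatorname{Aut}(P^{\mathrm T})=\widehat{\operatorname{Aut}(P)}\to\widehat L$ of the inclusion. This is applied to $P=V$ (exponent matrix $\operatorname{diag}(2,M)$, transpose $V^\star$) to define $L^\vee$, and to $P=W$ to define $G^\star:=$ dual of $G[J_W]$ in $\operatorname{Aut}_{W^\star}$. *)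

theory Defs
  imports Complex_Main
begin

text \<open>A diagonal symmetry is represented by its vector of diagonal entries
  g :: nat \<Rightarrow> complex; coordinates outside the variable index set are 1.
  Variables of W are x_1..x_n (indices {1..n}); x_0 (index 0) is the extra
  variable of V = x_0^2 + W.\<close>

definition dmul :: "(nat \<Rightarrow> complex) \<Rightarrow> (nat \<Rightarrow> complex) \<Rightarrow> (nat \<Rightarrow> complex)" where
  "dmul g h = (\<lambda>k. g k * h k)"

definition one_vec :: "nat \<Rightarrow> complex" where
  "one_vec = (\<lambda>_. 1)"

definition dinv :: "(nat \<Rightarrow> complex) \<Rightarrow> (nat \<Rightarrow> complex)" where
  "dinv g = (\<lambda>k. inverse (g k))"

definition is_subgroup :: "(nat \<Rightarrow> complex) set \<Rightarrow> bool" where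
  "is_subgroup H \<longleftrightarrow> one_vec \<in> H \<and> (\<forall>a\<in>H. \<forall>b\<in>H. dmul a b \<in> H) \<and> (\<forall>a\<in>H. dinv a \<in> H)"

text \<open>Group generated by a set S (L[h1,h2] = gen (L \<union> {h1,h2})).\<close>
definition gen :: "(nat \<Rightarrow> complex) set \<Rightarrow> (nat \<Rightarrow> complex) set" where
  "gen S = \<Inter>{H. is_subgroup H \<and> S \<subseteq> H}"

definition diag_act :: "(nat \<Rightarrow> complex) \<Rightarrow> (nat \<Rightarrow> complex) \<Rightarrow> (nat \<Rightarrow> complex)" where
  "diag_act g x = (\<lambda>j. g j * x j)"

definition polyfun :: "(nat \<Rightarrow> nat \<Rightarrow> nat) \<Rightarrow> nat set \<Rightarrow> (nat \<Rightarrow> complex) \<Rightarrow> complex" where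
  "polyfun A I x = (\<Sum>i\<in>I. \<Prod>j\<in>I. x j ^ A i j)"

definition pderivP :: "(nat \<Rightarrow> nat \<Rightarrow> nat) \<Rightarrow> nat set \<Rightarrow> nat \<Rightarrow> (nat \<Rightarrow> complex) \<Rightarrow> complex" where
  "pderivP A I j x = (\<Sum>i\<in>I. of_nat (A i j) * x j ^ (A i j - 1) * (\<Prod>k\<in>I - {j}. x k ^ A i k))"

definition nondegenerate :: "(nat \<Rightarrow> nat \<Rightarrow> nat) \<Rightarrow> nat set \<Rightarrow> bool" where
  "nondegenerate A I \<longleftrightarrow> (\<forall>x. (\<forall>j\<in>I. pderivP A I j x = 0) \<longrightarrow> (\<forall>j\<in>I. x j = 0))"

definition quasi_hom :: "(nat \<Rightarrow> nat \<Rightarrow> nat) \<Rightarrow> nat set \<Rightarrow> (nat \<Rightarrow> nat) \<Rightarrow> nat \<Rightarrow> bool" where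
  "quasi_hom A I w d \<longleftrightarrow> (\<forall>i\<in>I. (\<Sum>j\<in>I. A i j * w j) = d)"

definition is_inverse_exp :: "(nat \<Rightarrow> nat \<Rightarrow> nat) \<Rightarrow> nat set \<Rightarrow> (nat \<Rightarrow> nat \<Rightarrow> rat) \<Rightarrow> bool" where
  "is_inverse_exp A I B \<longleftrightarrow>
     (\<forall>i\<in>I. \<forall>j\<in>I. (\<Sum>k\<in>I. of_nat (A i k) * B k j) = (if i = j then 1 else 0)
                 \<and> (\<Sum>k\<in>I. B i k * of_nat (A k j)) = (if i = j then 1 else 0))"

definition invertible_exp :: "(nat \<Rightarrow> nat \<Rightarrow> nat) \<Rightarrow> nat set \<Rightarrow> bool" where
  "invertible_exp A I \<longleftrightarrow> (\<exists>B. is_inverse_exp A I B)"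

definition inv_exp :: "(nat \<Rightarrow> nat \<Rightarrow> nat) \<Rightarrow> nat set \<Rightarrow> nat \<Rightarrow> nat \<Rightarrow> rat" where
  "inv_exp A I = (SOME B. is_inverse_exp A I B)"

definition trans_exp :: "(nat \<Rightarrow> nat \<Rightarrow> nat) \<Rightarrow> nat \<Rightarrow> nat \<Rightarrow> nat" where
  "trans_exp A = (\<lambda>i j. A j i)"

text \<open>Exponent matrix of V = x_0^2 + W: diag(2, M).\<close>
definition Vmat :: "(nat \<Rightarrow> nat \<Rightarrow> nat) \<Rightarrow> nat \<Rightarrow> nat \<Rightarrow> nat" where
  "Vmat M = (\<lambda>i j. if i = 0 \<and> j = 0 then 2 else if i = 0 \<or> j = 0 then 0 else M i j)"

definition Aut :: "(nat \<Rightarrow> nat \<Rightarrow> nat) \<Rightarrow> nat set \<Rightarrow> (nat \<Rightarrow> complex) set" where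
  "Aut A I = {g. (\<forall>k. k \<notin> I \<longrightarrow> g k = 1) \<and> (\<forall>k\<in>I. g k \<noteq> 0)
                 \<and> (\<forall>x. polyfun A I (diag_act g x) = polyfun A I x)}"

definition SLgrp :: "(nat \<Rightarrow> nat \<Rightarrow> nat) \<Rightarrow> nat set \<Rightarrow> (nat \<Rightarrow> complex) set" where
  "SLgrp A I = {g \<in> Aut A I. (\<Prod>j\<in>I. g j) = 1}"

definition Jvec :: "(nat \<Rightarrow> real) \<Rightarrow> nat set \<Rightarrow> nat \<Rightarrow> complex" where
  "Jvec q I = (\<lambda>j. if j \<in> I then cis (2 * pi * q j) else 1)"

text \<open>The (unique, for invertible A) rational weights q with sum_j A i j q_j = 1.\<close>
definition rat_weights :: "(nat \<Rightarrow> nat \<Rightarrow> nat) \<Rightarrow> nat set \<Rightarrow> nat \<Rightarrow> rat" where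
  "rat_weights A I = (SOME q. \<forall>i\<in>I. (\<Sum>j\<in>I. of_nat (A i j) * q j) = 1)"

definition sigma :: "nat \<Rightarrow> complex" where
  "sigma = (\<lambda>j. if j = 0 then -1 else 1)"

definition rhobar :: "(nat \<Rightarrow> nat \<Rightarrow> nat) \<Rightarrow> nat set \<Rightarrow> nat \<Rightarrow> nat \<Rightarrow> complex" where
  "rhobar A I k = (\<lambda>j. if j \<in> I then cis (2 * pi * of_rat (inv_exp A I k j)) else 1)"

definition monomial :: "nat set \<Rightarrow> (nat \<Rightarrow> nat) \<Rightarrow> (nat \<Rightarrow> complex) \<Rightarrow> complex" where
  "monomial I r x = (\<Prod>k\<in>I. x k ^ r k)"

text \<open>Dual of L \<subseteq> Aut(P) inside Aut(P^T).\<close>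
definition BH_dual :: "(nat \<Rightarrow> nat \<Rightarrow> nat) \<Rightarrow> nat set \<Rightarrow> (nat \<Rightarrow> complex) set \<Rightarrow> (nat \<Rightarrow> complex) set" where
  "BH_dual A I L = {(\<lambda>j. \<Prod>k\<in>I. rhobar A I k j ^ r k) | r.
      \<forall>g\<in>L. \<forall>x. monomial I r (diag_act g x) = monomial I r x}"

end

theory Submission
  imports Defs
begin

(* For V = x_0^2 + W one has rhobar_0 = sigma and rhobar_k as for W, so the dual
   elements of V are sigma^(r_0) times those of W, and adjoining sigma to a group fixing x_0 just
   forces r_0 to be even: G[sigma, J_W]^vee = G^star.
   All other equalities come from one index-two principle: if t^2 lies in the group generated
   by S and the character of some x^s is trivial on S and -1 on t, then the dual of S is
   generated by the dual of S and t together with dual_elem s.  Removing sigma, J_W or sigma J_W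
   in turn, with x^s = x_0, x_1...x_n or x_0 x_1...x_n, adjoins sigma, J_(W^star) or
   sigma J_(W^star): the column sums of M^-1 are the weights of the transpose, and the
   Calabi--Yau condition 2 sum_j w_j = d says exactly that J_W has determinant -1. *)

section \<open>Characters of monomials and Berglund--Huebsch duals\<close>

definition mono_char :: "nat set \<Rightarrow> (nat \<Rightarrow> nat) \<Rightarrow> (nat \<Rightarrow> complex) \<Rightarrow> complex" where
  "mono_char I r g = (\<Prod>k\<in>I. g k ^ r k)"

definition dual_elem :: "(nat \<Rightarrow> nat \<Rightarrow> nat) \<Rightarrow> nat set \<Rightarrow> (nat \<Rightarrow> nat) \<Rightarrow> nat \<Rightarrow> complex" where
  "dual_elem A I r = (\<lambda>j. \<Prod>k\<in>I. rhobar A I k j ^ r k)"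

lemma gen_least: "is_subgroup H \<Longrightarrow> S \<subseteq> H \<Longrightarrow> gen S \<subseteq> H"
  unfolding gen_def by blast

lemma gen_incl: "S \<subseteq> gen S"
  unfolding gen_def by blast

lemma is_subgroup_gen: "is_subgroup (gen S)"
  unfolding gen_def is_subgroup_def by blast

lemma gen_mono: "S \<subseteq> T \<Longrightarrow> gen S \<subseteq> gen T"
  unfolding gen_def by blast

lemma gen_Un_gen: "gen (gen S \<union> T) = gen (S \<union> T)"
proof
  have "gen S \<subseteq> gen (S \<union> T)" by (simp add: gen_mono)
  then show "gen (gen S \<union> T) \<subseteq> gen (S \<union> T)"
    using gen_incl[of "S \<union> T"] by (intro gen_least is_subgroup_gen) auto
  show "gen (S \<union> T) \<subseteq> gen (gen S \<union> T)"
    using gen_incl[of S] by (intro gen_mono) auto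
qed

lemma one_vec_mem_gen: "one_vec \<in> gen S"
  using is_subgroup_gen unfolding is_subgroup_def by blast

lemma dmul_mem_gen: "a \<in> gen S \<Longrightarrow> b \<in> gen S \<Longrightarrow> dmul a b \<in> gen S"
  using is_subgroup_gen unfolding is_subgroup_def by blast

lemma dinv_mem_gen: "a \<in> gen S \<Longrightarrow> dinv a \<in> gen S"
  using is_subgroup_gen unfolding is_subgroup_def by blast

lemma gen_dmul_cancel:
  assumes "dmul a b \<in> gen S" and "b \<in> gen S" and "\<And>j. b j \<noteq> 0"
  shows "a \<in> gen S"
proof -
  have "a = dmul (dmul a b) (dinv b)"
    using assms(3) by (simp add: dmul_def dinv_def fun_eq_iff)
  then show ?thesis
    using assms(1,2) by (metis dinv_mem_gen dmul_mem_gen)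
qed

lemma gen_insert_dmul_subset: "gen (insert (dmul a b) S) \<subseteq> gen (insert a (insert b S))"
proof (rule gen_least[OF is_subgroup_gen])
  have "insert a (insert b S) \<subseteq> gen (insert a (insert b S))"
    by (rule gen_incl)
  then show "insert (dmul a b) S \<subseteq> gen (insert a (insert b S))"
    by (auto intro: dmul_mem_gen)
qed

lemma mono_char_dmul: "mono_char I r (dmul a b) = mono_char I r a * mono_char I r b"
  unfolding mono_char_def dmul_def by (simp add: power_mult_distrib prod.distrib)

lemma mono_char_dinv: "mono_char I r (dinv a) = inverse (mono_char I r a)"
  unfolding mono_char_def dinv_def by (simp add: power_inverse prod_inversef[symmetric])

lemma mono_char_one_vec: "mono_char I r one_vec = 1"
  unfolding mono_char_def one_vec_def by simp

lemma mono_char_add: "mono_char I (\<lambda>k. r k + s k) g = mono_char I r g * mono_char I s g"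
  unfolding mono_char_def by (simp add: power_add prod.distrib)

lemma mono_char_mult: "mono_char I (\<lambda>k. c * r k) g = mono_char I r g ^ c"
  unfolding mono_char_def prod_power_distrib
  by (intro prod.cong refl) (metis power_mult mult.commute)

lemma mono_char_cong: "(\<And>k. k \<in> I \<Longrightarrow> r k = s k) \<Longrightarrow> mono_char I r = mono_char I s"
  unfolding mono_char_def by (intro ext prod.cong) simp_all

lemma monomial_diag_act: "monomial I r (diag_act g x) = mono_char I r g * monomial I r x"
  unfolding monomial_def diag_act_def mono_char_def
  by (simp add: power_mult_distrib prod.distrib)

lemma BH_dual_eq: "BH_dual A I L = {dual_elem A I r | r. \<forall>g\<in>L. mono_char I r g = 1}"
proof -
  have "(\<forall>x. monomial I r (diag_act g x) = monomial I r x) \<longleftrightarrow> mono_char I r g = 1" for r g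
  proof
    assume "\<forall>x. monomial I r (diag_act g x) = monomial I r x"
    then have "monomial I r (diag_act g one_vec) = monomial I r one_vec" ..
    then show "mono_char I r g = 1"
      by (simp add: monomial_diag_act monomial_def one_vec_def diag_act_def mono_char_def)
  qed (simp add: monomial_diag_act)
  then show ?thesis
    unfolding BH_dual_def dual_elem_def by simp
qed

lemma mono_char_gen_iff: "(\<forall>g\<in>gen S. mono_char I r g = 1) \<longleftrightarrow> (\<forall>g\<in>S. mono_char I r g = 1)"
proof
  assume "\<forall>g\<in>S. mono_char I r g = 1"
  moreover have "is_subgroup {g. mono_char I r g = 1}"
    unfolding is_subgroup_def by (simp add: mono_char_dmul mono_char_dinv mono_char_one_vec)
  ultimately have "gen S \<subseteq> {g. mono_char I r g = 1}"
    by (intro gen_least) auto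
  then show "\<forall>g\<in>gen S. mono_char I r g = 1" by blast
qed (use gen_incl in blast)

lemma BH_dual_gen: "BH_dual A I (gen S) = BH_dual A I S"
  by (simp add: BH_dual_eq mono_char_gen_iff)

lemma BH_dual_antimono: "S \<subseteq> T \<Longrightarrow> BH_dual A I T \<subseteq> BH_dual A I S"
  unfolding BH_dual_eq by blast

lemma BH_dual_insert_dmul:
  "BH_dual A I (insert (dmul a b) (insert a S)) = BH_dual A I (insert a (insert b S))"
  unfolding BH_dual_eq by (auto simp: mono_char_dmul)

lemma dual_elem_eq_mono_char: "dual_elem A I r j = mono_char I r (\<lambda>k. rhobar A I k j)"
  unfolding dual_elem_def mono_char_def ..

lemma dual_elem_add: "dual_elem A I (\<lambda>k. r k + s k) = dmul (dual_elem A I r) (dual_elem A I s)"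
  unfolding dmul_def dual_elem_eq_mono_char mono_char_add ..

lemma dual_elem_mult: "dual_elem A I (\<lambda>k. c * r k) = (\<lambda>j. dual_elem A I r j ^ c)"
  unfolding dual_elem_eq_mono_char mono_char_mult ..

lemma dual_elem_cong: "(\<And>k. k \<in> I \<Longrightarrow> r k = s k) \<Longrightarrow> dual_elem A I r = dual_elem A I s"
  unfolding dual_elem_def by (intro ext prod.cong) simp_all

lemma dual_elem_nonzero: "finite I \<Longrightarrow> dual_elem A I r j \<noteq> 0"
  unfolding dual_elem_def rhobar_def by simp

lemma rhobar_pow_eq_1:
  assumes "finite I"
  obtains D :: nat where "D > 0" and "\<And>k j. k \<in> I \<Longrightarrow> rhobar A I k j ^ D = 1"
proof
  define den where "den p = nat (snd (quotient_of (inv_exp A I (fst p) (snd p))))" for p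
  define D where "D = (\<Prod>p\<in>I \<times> I. den p)"
  have "den p > 0" for p
    unfolding den_def using quotient_of_denom_pos' by simp
  then show "D > 0"
    unfolding D_def using assms by (simp add: prod_pos)
  fix k j assume k: "k \<in> I"
  show "rhobar A I k j ^ D = 1"
  proof (cases "j \<in> I")
    case True
    obtain a c where ac: "quotient_of (inv_exp A I k j) = (a, c)"
      by (cases "quotient_of (inv_exp A I k j)")
    have "den (k, j) dvd D"
      unfolding D_def using assms k True by (intro dvd_prodI) auto
    then obtain e where e: "D = nat c * e"
      using ac by (auto simp: den_def elim: dvdE)
    have "real D * of_rat (inv_exp A I k j) = of_int (a * int e)"
      using quotient_of_denom_pos[OF ac]
      by (simp add: e quotient_of_div[OF ac] of_rat_divide)
    then have "real D * (2 * pi * of_rat (inv_exp A I k j)) = 2 * pi * of_int (a * int e)"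
      by (metis mult.left_commute)
    then have "rhobar A I k j ^ D = cis (2 * pi * of_int (a * int e))"
      using True by (simp only: rhobar_def DeMoivre if_True)
    also have "\<dots> = 1"
      by (rule cis_multiple_2pi) simp
    finally show ?thesis .
  qed (simp add: rhobar_def)
qed

text \<open>Inverses exist in the dual because every \<open>rhobar A I k\<close> has finite order \<open>D\<close>,
  so \<open>dual_elem A I r\<close> is inverted by \<open>dual_elem A I ((D - 1) r)\<close>.\<close>

lemma is_subgroup_BH_dual:
  assumes "finite I"
  shows "is_subgroup (BH_dual A I S)"
proof -
  obtain D :: nat where "D > 0" and D: "\<And>k j. k \<in> I \<Longrightarrow> rhobar A I k j ^ D = 1"
    using rhobar_pow_eq_1[OF assms] by blast
  have "dual_elem A I r j ^ D = 1" for r j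
  proof -
    have "dual_elem A I r j ^ D = (\<Prod>k\<in>I. (rhobar A I k j ^ D) ^ r k)"
      unfolding dual_elem_def prod_power_distrib
      by (intro prod.cong refl) (metis power_mult mult.commute)
    then show ?thesis
      by (simp add: D)
  qed
  then have "dual_elem A I r j * dual_elem A I (\<lambda>k. (D - 1) * r k) j = 1" for r j
    using \<open>D > 0\<close> by (simp add: dual_elem_mult flip: power_Suc)
  then have inv: "dinv (dual_elem A I r) = dual_elem A I (\<lambda>k. (D - 1) * r k)" for r
    unfolding dinv_def by (intro ext inverse_unique)
  show ?thesis
    unfolding is_subgroup_def BH_dual_eq
  proof (intro conjI ballI)
    show "one_vec \<in> {dual_elem A I r |r. \<forall>g\<in>S. mono_char I r g = 1}"
      by (rule CollectI, rule exI[of _ "\<lambda>_. 0"]) (simp add: dual_elem_def one_vec_def mono_char_def)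
  next
    fix a b assume "a \<in> {dual_elem A I r |r. \<forall>g\<in>S. mono_char I r g = 1}"
      and "b \<in> {dual_elem A I r |r. \<forall>g\<in>S. mono_char I r g = 1}"
    then show "dmul a b \<in> {dual_elem A I r |r. \<forall>g\<in>S. mono_char I r g = 1}"
      by (auto simp: mono_char_add simp flip: dual_elem_add)
  next
    fix a assume "a \<in> {dual_elem A I r |r. \<forall>g\<in>S. mono_char I r g = 1}"
    then show "dinv a \<in> {dual_elem A I r |r. \<forall>g\<in>S. mono_char I r g = 1}"
      by (auto simp: inv mono_char_mult)
  qed
qed

text \<open>Since \<open>t\<^sup>2 \<in> gen S\<close>, a character trivial on \<open>S\<close> is \<open>\<plusminus>1\<close> on \<open>t\<close>; adding \<open>s\<close>
  to the exponent turns value \<open>-1\<close> into \<open>1\<close>.\<close>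

lemma BH_dual_index_two:
  assumes "finite I" and "dmul t t \<in> gen S"
    and s_S: "\<forall>u\<in>S. mono_char I s u = 1" and s_t: "mono_char I s t = -1"
  shows "BH_dual A I S = gen (BH_dual A I (insert t S) \<union> {dual_elem A I s})"
proof
  have "dual_elem A I s \<in> BH_dual A I S"
    using s_S unfolding BH_dual_eq by blast
  then show "gen (BH_dual A I (insert t S) \<union> {dual_elem A I s}) \<subseteq> BH_dual A I S"
    using BH_dual_antimono[of S "insert t S"]
    by (intro gen_least is_subgroup_BH_dual \<open>finite I\<close>) auto
next
  let ?H = "gen (BH_dual A I (insert t S) \<union> {dual_elem A I s})"
  have dual_t_H: "BH_dual A I (insert t S) \<subseteq> ?H" and s_H: "dual_elem A I s \<in> ?H"
    using gen_incl by blast+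
  show "BH_dual A I S \<subseteq> ?H"
  proof
    fix x assume "x \<in> BH_dual A I S"
    then obtain r where x: "x = dual_elem A I r" and r_S: "\<forall>u\<in>S. mono_char I r u = 1"
      unfolding BH_dual_eq by blast
    have "mono_char I r (dmul t t) = 1"
      using r_S \<open>dmul t t \<in> gen S\<close> mono_char_gen_iff by blast
    then have "mono_char I r t = 1 \<or> mono_char I r t = -1"
      by (simp add: mono_char_dmul square_eq_1_iff)
    then show "x \<in> ?H"
    proof
      assume "mono_char I r t = 1"
      then have "x \<in> BH_dual A I (insert t S)"
        using x r_S unfolding BH_dual_eq by blast
      then show ?thesis using dual_t_H by blast
    next
      assume "mono_char I r t = -1"
      then have "dual_elem A I (\<lambda>k. r k + s k) \<in> BH_dual A I (insert t S)"
        using r_S s_S s_t unfolding BH_dual_eq by (auto simp: mono_char_add)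
      then have "dmul x (dual_elem A I s) \<in> ?H"
        using x dual_t_H by (auto simp: dual_elem_add)
      then show ?thesis
        using s_H dual_elem_nonzero[OF \<open>finite I\<close>] by (rule gen_dmul_cancel)
    qed
  qed
qed

section \<open>The exponent matrix of \<open>x\<^sub>0\<^sup>2 + W\<close>\<close>

lemma inv_exp_is_inverse: "invertible_exp A I \<Longrightarrow> is_inverse_exp A I (inv_exp A I)"
  unfolding invertible_exp_def inv_exp_def by (rule someI_ex[of "is_inverse_exp A I"])

lemma left_inverse_eq_right_inverse:
  fixes A :: "nat \<Rightarrow> nat \<Rightarrow> nat" and B C :: "nat \<Rightarrow> nat \<Rightarrow> rat"
  assumes "finite I"
    and left: "\<And>i j. i \<in> I \<Longrightarrow> j \<in> I \<Longrightarrow>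
      (\<Sum>k\<in>I. C i k * of_nat (A k j)) = (if i = j then 1 else 0)"
    and right: "\<And>i j. i \<in> I \<Longrightarrow> j \<in> I \<Longrightarrow>
      (\<Sum>k\<in>I. of_nat (A i k) * B k j) = (if i = j then 1 else 0)"
    and "i \<in> I" "j \<in> I"
  shows "C i j = B i j"
proof -
  have "C i j = (\<Sum>l\<in>I. if l = j then C i l else 0)"
    using assms(1,5) by simp
  also have "\<dots> = (\<Sum>l\<in>I. C i l * (\<Sum>k\<in>I. of_nat (A l k) * B k j))"
    using assms(5) by (intro sum.cong refl) (simp add: right)
  also have "\<dots> = (\<Sum>l\<in>I. \<Sum>k\<in>I. C i l * of_nat (A l k) * B k j)"
    by (simp add: sum_distrib_left mult.assoc)
  also have "\<dots> = (\<Sum>k\<in>I. (\<Sum>l\<in>I. C i l * of_nat (A l k)) * B k j)"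
    by (subst sum.swap) (simp add: sum_distrib_right)
  also have "\<dots> = (\<Sum>k\<in>I. if k = i then B k j else 0)"
    using assms(4) by (intro sum.cong refl) (simp add: left)
  also have "\<dots> = B i j"
    using assms(1,4) by simp
  finally show ?thesis .
qed

lemma inv_exp_unique:
  assumes "finite I" and B: "is_inverse_exp A I B" and "i \<in> I" "j \<in> I"
  shows "inv_exp A I i j = B i j"
proof -
  have C: "is_inverse_exp A I (inv_exp A I)"
    using B by (intro inv_exp_is_inverse) (auto simp: invertible_exp_def)
  show ?thesis
    by (rule left_inverse_eq_right_inverse[where A = A, OF assms(1) _ _ assms(3,4)])
      (use B C in \<open>auto simp: is_inverse_exp_def\<close>)
qed

lemma atLeast0AtMost_eq_insert: "{0..n} = insert (0::nat) {1..n}"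
  by auto

lemma sum_atLeast0AtMost_split: "(\<Sum>k\<in>{0..n::nat}. f k) = f 0 + (\<Sum>k\<in>{1..n}. f k)"
  by (simp add: atLeast0AtMost_eq_insert)

lemma prod_atLeast0AtMost_split: "(\<Prod>k\<in>{0..n::nat}. f k) = f 0 * (\<Prod>k\<in>{1..n}. f k)"
  by (simp add: atLeast0AtMost_eq_insert)

lemma mono_char_atLeast0AtMost: "mono_char {0..n} r g = g 0 ^ r 0 * mono_char {1..n} r g"
  unfolding mono_char_def by (rule prod_atLeast0AtMost_split)

lemma is_inverse_exp_Vmat:
  assumes "is_inverse_exp M {1..n} B"
  shows "is_inverse_exp (Vmat M) {0..n}
           (\<lambda>i j. if i = 0 \<and> j = 0 then 1 / 2 else if i = 0 \<or> j = 0 then 0 else B i j)"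
    (is "is_inverse_exp _ _ ?B")
  unfolding is_inverse_exp_def
proof (intro ballI conjI)
  fix i j assume "i \<in> {0..n}" "j \<in> {0..n}"
  have "(\<Sum>k\<in>{1..n}. of_nat (Vmat M i k) * ?B k j) =
          (if i = 0 \<or> j = 0 then 0 else \<Sum>k\<in>{1..n}. of_nat (M i k) * B k j)"
    and "(\<Sum>k\<in>{1..n}. ?B i k * of_nat (Vmat M k j)) =
          (if i = 0 \<or> j = 0 then 0 else \<Sum>k\<in>{1..n}. B i k * of_nat (M k j))"
    by (auto simp: Vmat_def intro!: sum.neutral sum.cong)
  with assms \<open>i \<in> {0..n}\<close> \<open>j \<in> {0..n}\<close>
  show "(\<Sum>k\<in>{0..n}. of_nat (Vmat M i k) * ?B k j) = (if i = j then 1 else 0)"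
    and "(\<Sum>k\<in>{0..n}. ?B i k * of_nat (Vmat M k j)) = (if i = j then 1 else 0)"
    by (auto simp: sum_atLeast0AtMost_split Vmat_def is_inverse_exp_def)
qed

lemma inv_exp_Vmat:
  assumes "invertible_exp M {1..n}" and "i \<in> {0..n}" "j \<in> {0..n}"
  shows "inv_exp (Vmat M) {0..n} i j =
           (if i = 0 \<and> j = 0 then 1 / 2 else if i = 0 \<or> j = 0 then 0 else inv_exp M {1..n} i j)"
  using inv_exp_unique[OF _ is_inverse_exp_Vmat[OF inv_exp_is_inverse[OF assms(1)]]] assms(2,3)
  by simp

lemma rhobar_Vmat_0: "invertible_exp M {1..n} \<Longrightarrow> rhobar (Vmat M) {0..n} 0 = sigma"
  by (auto simp: fun_eq_iff rhobar_def sigma_def inv_exp_Vmat of_rat_divide)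

lemma rhobar_Vmat:
  "invertible_exp M {1..n} \<Longrightarrow> k \<in> {1..n} \<Longrightarrow> rhobar (Vmat M) {0..n} k = rhobar M {1..n} k"
  by (auto simp: fun_eq_iff rhobar_def inv_exp_Vmat)

lemma dual_elem_Vmat:
  assumes "invertible_exp M {1..n}"
  shows "dual_elem (Vmat M) {0..n} r = (\<lambda>j. sigma j ^ r 0 * dual_elem M {1..n} r j)"
  using assms unfolding dual_elem_def prod_atLeast0AtMost_split
  by (simp add: rhobar_Vmat_0 rhobar_Vmat)

lemma sigma_0: "sigma 0 = -1"
  by (simp add: sigma_def)

lemma sigma_pow_even: "even m \<Longrightarrow> sigma j ^ m = 1"
  by (simp add: sigma_def)

lemma sigma_sq_mem_gen: "dmul sigma sigma \<in> gen S"
proof -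
  have "dmul sigma sigma = one_vec"
    by (simp add: dmul_def sigma_def one_vec_def fun_eq_iff)
  then show ?thesis
    using one_vec_mem_gen by simp
qed

lemma mono_char_sigma: "0 \<notin> I \<Longrightarrow> mono_char I r sigma = 1"
  unfolding mono_char_def sigma_def by (rule prod.neutral) auto

lemma BH_dual_Vmat_insert_sigma:
  assumes inv: "invertible_exp M {1..n}" and fix0: "\<forall>t\<in>S. t 0 = 1"
  shows "BH_dual (Vmat M) {0..n} (insert sigma S) = BH_dual M {1..n} S"
proof
  show "BH_dual (Vmat M) {0..n} (insert sigma S) \<subseteq> BH_dual M {1..n} S"
  proof
    fix x assume "x \<in> BH_dual (Vmat M) {0..n} (insert sigma S)"
    then obtain r where x: "x = dual_elem (Vmat M) {0..n} r"
      and r_sigma: "mono_char {0..n} r sigma = 1" and r_S: "\<forall>t\<in>S. mono_char {0..n} r t = 1"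
      unfolding BH_dual_eq by blast
    have "even (r 0)"
      using r_sigma
      by (simp add: mono_char_atLeast0AtMost mono_char_sigma sigma_0 minus_one_power_iff split: if_splits)
    then have "x = dual_elem M {1..n} r"
      by (simp add: x dual_elem_Vmat[OF inv] sigma_pow_even)
    moreover have "mono_char {1..n} r t = 1" if "t \<in> S" for t
      using r_S fix0 that by (metis mono_char_atLeast0AtMost mult_1 power_one)
    ultimately show "x \<in> BH_dual M {1..n} S"
      unfolding BH_dual_eq by blast
  qed
next
  show "BH_dual M {1..n} S \<subseteq> BH_dual (Vmat M) {0..n} (insert sigma S)"
  proof
    fix x assume "x \<in> BH_dual M {1..n} S"
    then obtain r where x: "x = dual_elem M {1..n} r" and r_S: "\<forall>t\<in>S. mono_char {1..n} r t = 1"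
      unfolding BH_dual_eq by blast
    define r' where "r' = r(0 := 0)"
    have "mono_char {1..n} r' = mono_char {1..n} r" and "dual_elem M {1..n} r' = dual_elem M {1..n} r"
      unfolding r'_def by (auto intro: mono_char_cong dual_elem_cong)
    then have "x = dual_elem (Vmat M) {0..n} r'"
      and "\<forall>t\<in>insert sigma S. mono_char {0..n} r' t = 1"
      using r_S by (simp_all add: x dual_elem_Vmat[OF inv] mono_char_atLeast0AtMost mono_char_sigma r'_def)
    then show "x \<in> BH_dual (Vmat M) {0..n} (insert sigma S)"
      unfolding BH_dual_eq by blast
  qed
qed

section \<open>Weights of the transpose\<close>

lemma trans_exp_solve:
  fixes q v :: "nat \<Rightarrow> rat"
  assumes "finite I" and B: "is_inverse_exp M I B"
    and q: "\<forall>i\<in>I. (\<Sum>l\<in>I. of_nat (trans_exp M i l) * q l) = v i" and "j \<in> I"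
  shows "q j = (\<Sum>i\<in>I. B i j * v i)"
proof -
  have "q j = (\<Sum>l\<in>I. if l = j then q l else 0)"
    using assms(1,4) by simp
  also have "\<dots> = (\<Sum>l\<in>I. (\<Sum>i\<in>I. of_nat (M l i) * B i j) * q l)"
    using B \<open>j \<in> I\<close> by (intro sum.cong refl) (simp add: is_inverse_exp_def)
  also have "\<dots> = (\<Sum>l\<in>I. \<Sum>i\<in>I. B i j * (of_nat (M l i) * q l))"
    by (simp add: sum_distrib_left sum_distrib_right mult_ac)
  also have "\<dots> = (\<Sum>i\<in>I. B i j * (\<Sum>l\<in>I. of_nat (trans_exp M i l) * q l))"
    by (subst sum.swap) (simp add: trans_exp_def sum_distrib_left)
  also have "\<dots> = (\<Sum>i\<in>I. B i j * v i)"
    using q by simp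
  finally show ?thesis .
qed

lemma rat_weights_trans_exp:
  assumes "finite I" and "invertible_exp M I" and "j \<in> I"
  shows "rat_weights (trans_exp M) I j = (\<Sum>k\<in>I. inv_exp M I k j)"
proof -
  let ?B = "inv_exp M I"
  let ?solves = "\<lambda>q. \<forall>i\<in>I. (\<Sum>l\<in>I. of_nat (trans_exp M i l) * q l) = (1::rat)"
  have B: "is_inverse_exp M I ?B"
    using assms(2) by (rule inv_exp_is_inverse)
  have "?solves (\<lambda>l. \<Sum>k\<in>I. ?B k l)"
  proof
    fix i assume "i \<in> I"
    have "(\<Sum>l\<in>I. of_nat (trans_exp M i l) * (\<Sum>k\<in>I. ?B k l))
        = (\<Sum>k\<in>I. \<Sum>l\<in>I. ?B k l * of_nat (M l i))"
      by (subst sum.swap) (simp add: trans_exp_def sum_distrib_left mult.commute)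
    also have "\<dots> = 1"
      using B \<open>i \<in> I\<close> assms(1) by (simp add: is_inverse_exp_def)
    finally show "(\<Sum>l\<in>I. of_nat (trans_exp M i l) * (\<Sum>k\<in>I. ?B k l)) = 1" .
  qed
  then have "?solves (rat_weights (trans_exp M) I)"
    unfolding rat_weights_def by (rule someI[where P = ?solves])
  from trans_exp_solve[OF assms(1) B this assms(3)] show ?thesis
    by simp
qed

lemma prod_cis: "finite I \<Longrightarrow> (\<Prod>k\<in>I. cis (f k)) = cis (\<Sum>k\<in>I. f k)"
  by (induction I rule: finite_induct) (simp_all add: cis_mult)

lemma Jvec_rat_weights_trans_exp:
  assumes "finite I" and "invertible_exp M I"
  shows "Jvec (\<lambda>j. of_rat (rat_weights (trans_exp M) I j)) I = dual_elem M I (\<lambda>_. 1)"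
  using assms
  by (auto simp: fun_eq_iff Jvec_def dual_elem_def rhobar_def prod_cis rat_weights_trans_exp
      of_rat_sum sum_distrib_left)

lemma mono_char_Jvec_calabi_yau:
  assumes "d > 0" and "2 * (\<Sum>j\<in>I. w j) = d" and "finite I"
  shows "mono_char I (\<lambda>_. 1) (Jvec (\<lambda>j. real (w j) / real d) I) = -1"
proof -
  have d: "real d = 2 * real (\<Sum>j\<in>I. w j)"
    using assms(2) by (metis of_nat_mult of_nat_numeral)
  have "(\<Sum>j\<in>I. 2 * pi * (real (w j) / real d)) = 2 * pi * real (\<Sum>j\<in>I. w j) / real d"
    by (simp add: sum_distrib_left sum_divide_distrib)
  also have "\<dots> = pi"
    using assms(1) d by simp
  finally show ?thesis
    using assms(3) by (simp add: mono_char_def Jvec_def prod_cis)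
qed

section \<open>Duals of the extensions of \<open>G\<close> by \<open>\<sigma>\<close> and \<open>J\<^sub>W\<close>\<close>

definition exp_x0 :: "nat \<Rightarrow> nat" where
  "exp_x0 k = of_bool (k = 0)"

definition exp_x1_xn :: "nat \<Rightarrow> nat" where
  "exp_x1_xn k = of_bool (0 < k)"

lemma dmul_apply: "dmul a b k = a k * b k"
  by (simp add: dmul_def)

lemma dual_elem_Vmat_exp_x0:
  assumes "invertible_exp M {1..n}"
  shows "dual_elem (Vmat M) {0..n} exp_x0 = sigma"
proof -
  have "dual_elem M {1..n} exp_x0 = dual_elem M {1..n} (\<lambda>_. 0)"
    by (rule dual_elem_cong) (simp add: exp_x0_def)
  then show ?thesis
    unfolding dual_elem_Vmat[OF assms] by (simp add: dual_elem_def exp_x0_def)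
qed

lemma dual_elem_Vmat_exp_x1_xn:
  assumes "invertible_exp M {1..n}"
  shows "dual_elem (Vmat M) {0..n} exp_x1_xn = dual_elem M {1..n} (\<lambda>_. 1)"
proof -
  have "dual_elem M {1..n} exp_x1_xn = dual_elem M {1..n} (\<lambda>_. 1)"
    by (rule dual_elem_cong) (simp add: exp_x1_xn_def)
  then show ?thesis
    unfolding dual_elem_Vmat[OF assms] by (simp add: exp_x1_xn_def)
qed

lemma mono_char_exp_x0: "mono_char {0..n} exp_x0 t = t 0"
proof -
  have "mono_char {1..n} exp_x0 t = 1"
    unfolding mono_char_def by (rule prod.neutral) (simp add: exp_x0_def)
  then show ?thesis
    unfolding mono_char_atLeast0AtMost by (simp add: exp_x0_def)
qed

lemma mono_char_exp_x1_xn: "mono_char {0..n} exp_x1_xn t = mono_char {1..n} (\<lambda>_. 1) t"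
proof -
  have "mono_char {1..n} exp_x1_xn = mono_char {1..n} (\<lambda>_. 1)"
    by (rule mono_char_cong) (simp add: exp_x1_xn_def)
  then show ?thesis
    unfolding mono_char_atLeast0AtMost by (simp add: exp_x1_xn_def)
qed

text \<open>\<open>mono_char {1..n} (\<lambda>_. 1)\<close> is the determinant on the variables of \<open>W\<close>; \<open>J\<close> plays
  the role of \<open>J\<^sub>W\<close>, and \<open>G_star\<close>, \<open>J_star\<close> below are \<open>G\<^sup>\<star>\<close> and \<open>J\<^sub>W\<^sub>\<star>\<close>.\<close>

locale SL_group_with_J =
  fixes n :: nat and M :: "nat \<Rightarrow> nat \<Rightarrow> nat"
    and G :: "(nat \<Rightarrow> complex) set" and J :: "nat \<Rightarrow> complex"
  assumes invertible: "invertible_exp M {1..n}"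
    and G_fix0: "\<And>g. g \<in> G \<Longrightarrow> g 0 = 1"
    and G_det: "\<And>g. g \<in> G \<Longrightarrow> mono_char {1..n} (\<lambda>_. 1) g = 1"
    and J_fix0: "J 0 = 1"
    and J_det: "mono_char {1..n} (\<lambda>_. 1) J = -1"
    and J_sq: "dmul J J \<in> G"
begin

abbreviation V_dual :: "(nat \<Rightarrow> complex) set \<Rightarrow> (nat \<Rightarrow> complex) set" where
  "V_dual \<equiv> BH_dual (Vmat M) {0..n}"

abbreviation G_star :: "(nat \<Rightarrow> complex) set" where
  "G_star \<equiv> BH_dual M {1..n} (insert J G)"

abbreviation J_star :: "nat \<Rightarrow> complex" where
  "J_star \<equiv> dual_elem M {1..n} (\<lambda>_. 1)"

lemma V_dual_sigma_J: "V_dual (insert sigma (insert J G)) = G_star"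
  using G_fix0 J_fix0 by (intro BH_dual_Vmat_insert_sigma invertible) auto

lemma V_dual_J: "V_dual (insert J G) = gen (G_star \<union> {sigma})"
proof -
  have "V_dual (insert J G) =
          gen (V_dual (insert sigma (insert J G)) \<union> {dual_elem (Vmat M) {0..n} exp_x0})"
    by (rule BH_dual_index_two) (auto simp: sigma_sq_mem_gen mono_char_exp_x0 G_fix0 J_fix0 sigma_0)
  then show ?thesis
    by (simp only: V_dual_sigma_J dual_elem_Vmat_exp_x0[OF invertible])
qed

lemma V_dual_sigma: "V_dual (insert sigma G) = gen (G_star \<union> {J_star})"
proof -
  have "V_dual (insert sigma G) =
          gen (V_dual (insert J (insert sigma G)) \<union> {dual_elem (Vmat M) {0..n} exp_x1_xn})"
  proof (rule BH_dual_index_two)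
    show "dmul J J \<in> gen (insert sigma G)"
      using J_sq gen_incl by blast
  qed (use G_det J_det in \<open>auto simp: mono_char_exp_x1_xn mono_char_sigma\<close>)
  then show ?thesis
    by (simp only: insert_commute[of J sigma] V_dual_sigma_J dual_elem_Vmat_exp_x1_xn[OF invertible])
qed

lemma V_dual_sigma_J_prod:
  "V_dual (insert (dmul sigma J) G) = gen (G_star \<union> {dmul sigma J_star})"
proof -
  let ?s = "\<lambda>k. exp_x0 k + exp_x1_xn k"
  have "V_dual (insert (dmul sigma J) G) =
          gen (V_dual (insert sigma (insert (dmul sigma J) G)) \<union> {dual_elem (Vmat M) {0..n} ?s})"
    by (rule BH_dual_index_two) (use G_fix0 G_det J_fix0 J_det in
      \<open>auto simp: sigma_sq_mem_gen mono_char_add mono_char_exp_x0 mono_char_exp_x1_xn mono_char_dmul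
        mono_char_sigma sigma_0 dmul_apply\<close>)
  moreover have "V_dual (insert sigma (insert (dmul sigma J) G)) = G_star"
    using BH_dual_insert_dmul[of "Vmat M" "{0..n}" sigma J G] V_dual_sigma_J
    by (simp add: insert_commute)
  ultimately show ?thesis
    by (simp only: dual_elem_add dual_elem_Vmat_exp_x0[OF invertible]
        dual_elem_Vmat_exp_x1_xn[OF invertible])
qed

lemma V_dual_G: "V_dual G = gen (G_star \<union> {sigma, J_star})"
proof -
  have "V_dual G = gen (V_dual (insert sigma G) \<union> {dual_elem (Vmat M) {0..n} exp_x0})"
    by (rule BH_dual_index_two) (auto simp: sigma_sq_mem_gen mono_char_exp_x0 G_fix0 sigma_0)
  also have "\<dots> = gen (gen (G_star \<union> {J_star}) \<union> {sigma})"
    by (simp only: dual_elem_Vmat_exp_x0[OF invertible] V_dual_sigma)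
  also have "\<dots> = gen (G_star \<union> {sigma, J_star})"
    unfolding gen_Un_gen by (rule arg_cong[where f = gen]) blast
  finally show ?thesis .
qed

end

theorem proposition4p5:
  fixes n d :: nat and M :: "nat \<Rightarrow> nat \<Rightarrow> nat" and w :: "nat \<Rightarrow> nat"
    and G :: "(nat \<Rightarrow> complex) set"
  assumes inv: "invertible_exp M {1..n}"
    and wpos: "\<forall>j\<in>{1..n}. w j > 0" and dpos: "d > 0"
    and qh: "quasi_hom M {1..n} w d"
    and nondeg: "nondegenerate M {1..n}"
    and cy: "2 * (\<Sum>j\<in>{1..n}. w j) = d"
    and Gsub: "is_subgroup G" and GSL: "G \<subseteq> SLgrp M {1..n}"
    and JW_def: "JW = Jvec (\<lambda>j. real (w j) / real d) {1..n}"
    and JWs_def: "JWs = Jvec (\<lambda>j. of_rat (rat_weights (trans_exp M) {1..n} j)) {1..n}"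
    and J2: "dmul JW JW \<in> G"
    and Gs_def: "Gs = BH_dual M {1..n} (gen (G \<union> {JW}))"
    and dV_def: "dV = (\<lambda>L. BH_dual (Vmat M) {0..n} L)"
  shows "dV G = gen (Gs \<union> {sigma, JWs})
       \<and> dV (gen (G \<union> {sigma})) = gen (Gs \<union> {JWs})
       \<and> dV (gen (G \<union> {dmul sigma JW})) = gen (Gs \<union> {dmul sigma JWs})
       \<and> dV (gen (G \<union> {JW})) = gen (Gs \<union> {sigma})
       \<and> dV (gen (G \<union> {sigma, JW})) = Gs
       \<and> G \<subseteq> gen (G \<union> {sigma}) \<and> G \<subseteq> gen (G \<union> {dmul sigma JW}) \<and> G \<subseteq> gen (G \<union> {JW})
       \<and> gen (G \<union> {sigma}) \<subseteq> gen (G \<union> {sigma, JW})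
       \<and> gen (G \<union> {dmul sigma JW}) \<subseteq> gen (G \<union> {sigma, JW})
       \<and> gen (G \<union> {JW}) \<subseteq> gen (G \<union> {sigma, JW})
       \<and> Gs \<subseteq> gen (Gs \<union> {JWs}) \<and> Gs \<subseteq> gen (Gs \<union> {dmul sigma JWs}) \<and> Gs \<subseteq> gen (Gs \<union> {sigma})
       \<and> gen (Gs \<union> {JWs}) \<subseteq> gen (Gs \<union> {sigma, JWs})
       \<and> gen (Gs \<union> {dmul sigma JWs}) \<subseteq> gen (Gs \<union> {sigma, JWs})
       \<and> gen (Gs \<union> {sigma}) \<subseteq> gen (Gs \<union> {sigma, JWs})"
proof -
  interpret SL_group_with_J n M G JW
  proof
    show "g 0 = 1" and "mono_char {1..n} (\<lambda>_. 1) g = 1" if "g \<in> G" for g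
      using that GSL by (auto simp: SLgrp_def Aut_def mono_char_def)
    show "JW 0 = 1"
      by (simp add: JW_def Jvec_def)
    show "mono_char {1..n} (\<lambda>_. 1) JW = -1"
      unfolding JW_def using dpos cy by (intro mono_char_Jvec_calabi_yau) auto
  qed (use inv J2 in auto)
  have "JWs = J_star"
    unfolding JWs_def using inv by (rule Jvec_rat_weights_trans_exp[rotated]) simp
  moreover have "Gs = G_star"
    by (simp add: Gs_def BH_dual_gen)
  ultimately show ?thesis
    using V_dual_G V_dual_sigma V_dual_sigma_J_prod V_dual_J V_dual_sigma_J
      gen_insert_dmul_subset[of sigma JW G] gen_insert_dmul_subset[of sigma JWs Gs]
    by (auto simp: dV_def BH_dual_gen intro: gen_incl[THEN subsetD] gen_mono[THEN subsetD])
qed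

end
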